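(* Let $H\in(0,1)$, let $B^H$ be a fractional Brownian motion on $[0,1]$ with Hurst index $H$, fix $\delta\in(0,H)$ and $\rho>0$, and define $$N=\sup\Bigl\{n\ge1:\ \|B^H_n-B^H_{n-1}\|_\infty\ge \rho\cdot 2^{-(H-\delta)n}\Bigr\}.$$ Then for every $t>0$, $\mathbb{E}[\exp\{tN\}]<\infty$. Moreover, for every $n>N$, $$\|B^H-B^H_n\|_\infty\le \frac{\rho\cdot 2^{-(H-\delta)(n+1)}}{1-2^{-(H-\delta)}}.$$
   Context: A fractional Brownian motion with Hurst index $H$ is a centered Gaussian process with $B^H(0)=0$ and covariance $\mathbb{E}[B^H(s)B^H(t)]=\tfrac12(|s|^{2H}+|t|^{2H}-|s-t|^{2H})$, taken with continuous sample paths. For $n\ge0$, $B^H_n$ is the function on $[0,1]$ obtained by linear interpolation of the values of $B^H$ at the dyadic points $i/2^n$, $i=0,\dots,2^n$; $B^H_{-1}\equiv0$. $\|u\|_\infty=\sup_{t\in[0,1]}|u(t)|$. (In the paper $\rho$ arises as $2(\nu+\nu^* )$ for arbitrary $\nu,\nu^*>0$, i.e. $\rho$ is an arbitrary positive constant.) *)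

theory Defs
  imports "HOL-Probability.Probability"
begin

definition real_gaussian :: "'a measure \<Rightarrow> ('a \<Rightarrow> real) \<Rightarrow> bool" where
  "real_gaussian M X \<longleftrightarrow>
     X \<in> borel_measurable M \<and>
     ((\<exists>\<mu> \<sigma>. \<sigma> > 0 \<and> distributed M lborel X (normal_density \<mu> \<sigma>)) \<or>
      (\<exists>c. AE \<omega> in M. X \<omega> = c))"

definition fBm :: "'a measure \<Rightarrow> real \<Rightarrow> (real \<Rightarrow> 'a \<Rightarrow> real) \<Rightarrow> bool" where
  "fBm M H B \<longleftrightarrow>
     prob_space M \<and>
     (\<forall>t\<in>{0..1}. B t \<in> borel_measurable M) \<and>
     (\<forall>\<omega>\<in>space M. B 0 \<omega> = 0) \<and>
     (\<forall>\<omega>\<in>space M. continuous_on {0..1} (\<lambda>t. B t \<omega>)) \<and>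
     (\<forall>(ts::real list) (cs::real list). length cs = length ts \<longrightarrow> set ts \<subseteq> {0..1} \<longrightarrow>
        real_gaussian M (\<lambda>\<omega>. \<Sum>i<length ts. cs ! i * B (ts ! i) \<omega>)) \<and>
     (\<forall>t\<in>{0..1}. integral\<^sup>L M (B t) = 0) \<and>
     (\<forall>s\<in>{0..1}. \<forall>t\<in>{0..1}.
        integral\<^sup>L M (\<lambda>\<omega>. B s \<omega> * B t \<omega>) =
          (\<bar>s\<bar> powr (2*H) + \<bar>t\<bar> powr (2*H) - \<bar>s - t\<bar> powr (2*H)) / 2)"

definition dyadic_interp :: "nat \<Rightarrow> (real \<Rightarrow> real) \<Rightarrow> real \<Rightarrow> real" where
  "dyadic_interp n f t =
     (let i = min (nat \<lfloor>t * 2 ^ n\<rfloor>) (2 ^ n - 1);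
          l = t * 2 ^ n - real i
      in (1 - l) * f (real i / 2 ^ n) + l * f (real (i + 1) / 2 ^ n))"

definition supnorm01 :: "(real \<Rightarrow> real) \<Rightarrow> real" where
  "supnorm01 u = (SUP t\<in>{0..1}. \<bar>u t\<bar>)"

text \<open>The random index N (sup in the extended naturals; Sup of the empty set is 0).\<close>
definition fbm_N :: "(real \<Rightarrow> 'a \<Rightarrow> real) \<Rightarrow> real \<Rightarrow> real \<Rightarrow> real \<Rightarrow> 'a \<Rightarrow> enat" where
  "fbm_N B H \<delta> \<rho> \<omega> =
     Sup (enat ` {n. n \<ge> 1 \<and>
        supnorm01 (\<lambda>t. dyadic_interp n (\<lambda>s. B s \<omega>) t - dyadic_interp (n - 1) (\<lambda>s. B s \<omega>) t)
          \<ge> \<rho> * 2 powr (- (H - \<delta>) * real n)})"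

definition exp_enat :: "real \<Rightarrow> enat \<Rightarrow> ennreal" where
  "exp_enat t N = (case N of enat k \<Rightarrow> ennreal (exp (t * real k)) | \<infinity> \<Rightarrow> \<infinity>)"

end

theory Submission
  imports Defs
begin

text \<open>
  Passing from the dyadic interpolant of level \<open>k\<close> to level \<open>k + 1\<close> adds, on each interval
  \<open>[j/2^k, (j+1)/2^k]\<close>, a hat function whose height is the midpoint defect
  \<open>\<Delta>\<^sub>k\<^sub>j = B((2j+1)/2^(k+1)) - (B(j/2^k) + B((j+1)/2^k))/2\<close>; hence
  \<open>\<parallel>B\<^sub>k\<^sub>+\<^sub>1 - B\<^sub>k\<parallel>\<^sub>\<infinity> \<le> max\<^sub>j \<bar>\<Delta>\<^sub>k\<^sub>j\<bar>\<close>. Each \<open>\<Delta>\<^sub>k\<^sub>j\<close> is a centred Gaussian of variance at most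
  \<open>2^(-2H(k+1))\<close>, so Markov's inequality for its \<open>2p\<close>-th moment bounds the probability of the
  event \<open>E\<^sub>k\<close> that some \<open>\<bar>\<Delta>\<^sub>k\<^sub>j\<bar>\<close> exceeds \<open>\<rho> 2^(-(H-\<delta>)(k+1))\<close> by \<open>C\<^sub>p (2 \<cdot> 2^(-2\<delta>p))^(k+1)\<close>.
  Since \<open>N \<ge> n \<ge> 1\<close> forces \<open>E\<^sub>n\<^sub>-\<^sub>1\<close>, we get \<open>e^(tN) \<le> 1 + \<Sum>\<^sub>k e^(t(k+1)) 1\<^sub>E\<^sub>k\<close>, whose expectation
  is a convergent geometric series once \<open>p\<close> is so large that \<open>e^t \<cdot> 2 \<cdot> 2^(-2\<delta>p) < 1\<close>.
  For \<open>n > N\<close> all later refinements are below \<open>\<rho> 2^(-(H-\<delta>)m)\<close>, and since the interpolants of a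
  continuous path converge pointwise, telescoping gives the geometric tail bound.
\<close>

definition dyadic_index :: "nat \<Rightarrow> real \<Rightarrow> nat" where
  "dyadic_index n t = min (nat \<lfloor>t * 2 ^ n\<rfloor>) (2 ^ n - 1)"

definition dyadic_frac :: "nat \<Rightarrow> real \<Rightarrow> real" where
  "dyadic_frac n t = t * 2 ^ n - real (dyadic_index n t)"

lemma dyadic_interp_eq:
  "dyadic_interp n f t =
     (1 - dyadic_frac n t) * f (real (dyadic_index n t) / 2 ^ n)
       + dyadic_frac n t * f (real (dyadic_index n t + 1) / 2 ^ n)"
  by (simp add: dyadic_interp_def dyadic_index_def dyadic_frac_def Let_def)

lemma dyadic_index_frac_bounds:
  assumes "0 \<le> t" "t \<le> 1"
  shows "dyadic_index n t < 2 ^ n \<and> 0 \<le> dyadic_frac n t \<and> dyadic_frac n t \<le> 1"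
proof (cases "t < 1")
  case True
  define F where "F = \<lfloor>t * 2 ^ n\<rfloor>"
  have F_nonneg: "0 \<le> F" using assms by (simp add: F_def)
  have "t * 2 ^ n < 2 ^ n" using True by simp
  hence "F < 2 ^ n" unfolding F_def by (metis floor_less_iff of_int_numeral of_int_power)
  hence F_less: "nat F < 2 ^ n" using F_nonneg by (simp add: nat_less_iff)
  hence idx: "dyadic_index n t = nat F"
    unfolding dyadic_index_def F_def[symmetric] by linarith
  have "dyadic_frac n t = t * 2 ^ n - F"
    using F_nonneg by (simp add: dyadic_frac_def idx)
  moreover have "F \<le> t * 2 ^ n" "t * 2 ^ n < F + 1" unfolding F_def by linarith+
  ultimately show ?thesis using idx F_less by simp
next
  case False
  hence t: "t = 1" using assms by simp
  have "\<lfloor>(2::real) ^ n\<rfloor> = 2 ^ n" by (metis floor_of_int of_int_numeral of_int_power)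
  hence idx: "dyadic_index n t = 2 ^ n - 1" by (simp add: dyadic_index_def t nat_power_eq)
  hence "dyadic_frac n t = 1" by (simp add: dyadic_frac_def t of_nat_diff)
  thus ?thesis using idx by simp
qed

lemma dyadic_index_Suc:
  assumes "0 \<le> t"
  shows "dyadic_index k t = dyadic_index (Suc k) t div 2"
proof -
  define F where "F = \<lfloor>t * 2 ^ Suc k\<rfloor>"
  have F_nonneg: "0 \<le> F" using assms by (simp add: F_def)
  have "t * 2 ^ k = (t * 2 ^ Suc k) / real_of_int 2" by simp
  hence "\<lfloor>t * 2 ^ k\<rfloor> = F div 2" unfolding F_def
    by (metis floor_divide_real_eq_div zero_le_numeral)
  hence "dyadic_index k t = min (nat F div 2) (2 ^ k - 1)"
    using F_nonneg by (simp add: dyadic_index_def nat_div_distrib)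
  moreover have "dyadic_index (Suc k) t = min (nat F) (2 * 2 ^ k - 1)"
    by (simp add: dyadic_index_def F_def)
  moreover have "min (x div 2) (P - 1) = min x (2 * P - 1) div 2" if "1 \<le> P" for x P :: nat
    using that unfolding min_def by presburger
  ultimately show ?thesis by (metis one_le_numeral one_le_power)
qed

lemma dyadic_frac_Suc:
  assumes "0 \<le> t"
  shows "dyadic_frac k t = (dyadic_frac (Suc k) t + real (dyadic_index (Suc k) t mod 2)) / 2"
proof -
  define i where "i = dyadic_index (Suc k) t"
  have "i = 2 * (i div 2) + i mod 2" by simp
  hence "real i = 2 * real (i div 2) + real (i mod 2)"
    by (metis of_nat_add of_nat_mult of_nat_numeral)
  thus ?thesis using dyadic_index_Suc[OF assms, of k]
    unfolding dyadic_frac_def i_def[symmetric] by (simp add: field_simps)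
qed

definition midpoint_defect :: "(real \<Rightarrow> real) \<Rightarrow> nat \<Rightarrow> nat \<Rightarrow> real" where
  "midpoint_defect f k j =
     f (real (2 * j + 1) / 2 ^ Suc k) - (f (real j / 2 ^ k) + f (real (j + 1) / 2 ^ k)) / 2"

lemma dyadic_interp_Suc_diff_eq:
  assumes "0 \<le> t" "t \<le> 1"
  obtains j c where "j < 2 ^ k" "0 \<le> c" "c \<le> 1"
    "dyadic_interp (Suc k) f t - dyadic_interp k f t = c * midpoint_defect f k j"
proof -
  define i where "i = dyadic_index (Suc k) t"
  define l where "l = dyadic_frac (Suc k) t"
  define j where "j = i div 2"
  have i_less: "i < 2 ^ Suc k" and l: "0 \<le> l" "l \<le> 1"
    using dyadic_index_frac_bounds[OF assms, of "Suc k"] by (auto simp: i_def l_def)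
  have j_less: "j < 2 ^ k" using i_less by (simp add: j_def)
  have fine: "dyadic_interp (Suc k) f t
      = (1 - l) * f (real i / 2 ^ Suc k) + l * f (real (i + 1) / 2 ^ Suc k)"
    by (simp add: dyadic_interp_eq i_def l_def)
  have "dyadic_index k t = j" "dyadic_frac k t = (l + real (i mod 2)) / 2"
    using dyadic_index_Suc[OF assms(1), of k] dyadic_frac_Suc[OF assms(1), of k]
    by (simp_all add: i_def l_def j_def)
  hence coarse: "dyadic_interp k f t
      = (1 - (l + real (i mod 2)) / 2) * f (real j / 2 ^ k)
        + (l + real (i mod 2)) / 2 * f (real (j + 1) / 2 ^ k)"
    by (simp only: dyadic_interp_eq)
  show ?thesis
  proof (cases "even i")
    case True
    hence "i = 2 * j" by (simp add: j_def)
    hence "dyadic_interp (Suc k) f t - dyadic_interp k f t = l * midpoint_defect f k j"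
      unfolding fine coarse midpoint_defect_def by (simp add: algebra_simps)
    thus ?thesis by (rule that[OF j_less l])
  next
    case False
    hence i: "i = 2 * j + 1" "i mod 2 = 1" by (simp_all add: j_def odd_iff_mod_2_eq_one)
    have nodes: "real i / 2 ^ Suc k = real (2 * j + 1) / 2 ^ Suc k"
      "real (i + 1) / 2 ^ Suc k = real (j + 1) / 2 ^ k"
      by (simp_all add: i field_simps)
    have "dyadic_interp (Suc k) f t - dyadic_interp k f t = (1 - l) * midpoint_defect f k j"
      unfolding fine nodes coarse midpoint_defect_def i(2) by (simp add: field_simps)
    thus ?thesis using that[OF j_less, of "1 - l"] l by simp
  qed
qed

lemma abs_dyadic_interp_Suc_diff_le:
  assumes "0 \<le> t" "t \<le> 1"
  shows "\<bar>dyadic_interp (Suc k) f t - dyadic_interp k f t\<bar>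
           \<le> Max ((\<lambda>j. \<bar>midpoint_defect f k j\<bar>) ` {..<2 ^ k})"
proof -
  obtain j c where j: "j < 2 ^ k" and c: "0 \<le> c" "c \<le> 1"
    and eq: "dyadic_interp (Suc k) f t - dyadic_interp k f t = c * midpoint_defect f k j"
    using dyadic_interp_Suc_diff_eq[OF assms] .
  have "\<bar>c * midpoint_defect f k j\<bar> \<le> \<bar>midpoint_defect f k j\<bar>"
    using c by (simp add: abs_mult mult_left_le_one_le)
  also have "\<dots> \<le> Max ((\<lambda>j. \<bar>midpoint_defect f k j\<bar>) ` {..<2 ^ k})"
    using j by (intro Max_ge) auto
  finally show ?thesis by (simp only: eq)
qed

lemma abs_le_supnorm01:
  assumes "bdd_above ((\<lambda>t. \<bar>u t\<bar>) ` {0..1})" "t \<in> {0..1}"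
  shows "\<bar>u t\<bar> \<le> supnorm01 u"
  unfolding supnorm01_def using assms by (rule cSUP_upper2) simp

lemma supnorm01_le:
  assumes "\<And>t. t \<in> {0..1} \<Longrightarrow> \<bar>u t\<bar> \<le> C"
  shows "supnorm01 u \<le> C"
  unfolding supnorm01_def using assms by (intro cSUP_least) auto

lemma abs_dyadic_interp_Suc_diff_le_supnorm01:
  assumes "t \<in> {0..1}"
  shows "\<bar>dyadic_interp (Suc k) f t - dyadic_interp k f t\<bar>
           \<le> supnorm01 (\<lambda>t. dyadic_interp (Suc k) f t - dyadic_interp k f t)"
  using assms abs_dyadic_interp_Suc_diff_le
  by (intro abs_le_supnorm01 bdd_aboveI2) auto

lemma supnorm01_dyadic_interp_Suc_diff_le:
  "supnorm01 (\<lambda>t. dyadic_interp (Suc k) f t - dyadic_interp k f t)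
     \<le> Max ((\<lambda>j. \<bar>midpoint_defect f k j\<bar>) ` {..<2 ^ k})"
  using abs_dyadic_interp_Suc_diff_le by (intro supnorm01_le) auto

lemma dyadic_neighbours_near:
  fixes n :: nat
  assumes t: "t \<in> {0..1}"
  defines "a \<equiv> real (dyadic_index n t) / 2 ^ n" and "b \<equiv> real (dyadic_index n t + 1) / 2 ^ n"
  shows "a \<in> {0..1} \<and> b \<in> {0..1} \<and> \<bar>a - t\<bar> \<le> (1/2) ^ n \<and> \<bar>b - t\<bar> \<le> (1/2) ^ n"
proof -
  have bounds: "dyadic_index n t < 2 ^ n" "0 \<le> dyadic_frac n t" "dyadic_frac n t \<le> 1"
    using dyadic_index_frac_bounds t by auto
  have "real (dyadic_index n t) + 1 \<le> 2 ^ n"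
    using bounds(1)
    by (metis Suc_leI add.commute of_nat_Suc of_nat_le_iff of_nat_numeral of_nat_power)
  hence "0 \<le> a" "b \<le> 1" by (simp_all add: a_def b_def)
  moreover have "a = t - dyadic_frac n t / 2 ^ n" "b = t + (1 - dyadic_frac n t) / 2 ^ n"
    by (simp_all add: a_def b_def dyadic_frac_def field_simps)
  moreover have "dyadic_frac n t / 2 ^ n \<le> (1/2) ^ n" "(1 - dyadic_frac n t) / 2 ^ n \<le> (1/2) ^ n"
    using bounds by (simp_all add: power_one_over divide_right_mono)
  moreover have "0 \<le> dyadic_frac n t / 2 ^ n" "0 \<le> (1 - dyadic_frac n t) / 2 ^ n"
    using bounds by simp_all
  ultimately show ?thesis
    using t unfolding atLeastAtMost_iff abs_le_iff by (intro conjI; linarith)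
qed

lemma dyadic_interp_tendsto:
  assumes f: "continuous_on {0..1} f" and t: "t \<in> {0..1}"
  shows "(\<lambda>n. dyadic_interp n f t) \<longlonglongrightarrow> f t"
proof -
  define a where "a n = real (dyadic_index n t) / 2 ^ n" for n
  define b where "b n = real (dyadic_index n t + 1) / 2 ^ n" for n
  note near = dyadic_neighbours_near[OF t, folded a_def b_def]
  have "(\<lambda>n. (1/2::real) ^ n) \<longlonglongrightarrow> 0" by (rule LIMSEQ_power_zero) simp
  hence "(\<lambda>n. a n - t) \<longlonglongrightarrow> 0" "(\<lambda>n. b n - t) \<longlonglongrightarrow> 0"
    using near by (auto intro!: Lim_null_comparison[where g = "\<lambda>n. (1/2) ^ n"])
  hence "a \<longlonglongrightarrow> t" "b \<longlonglongrightarrow> t" by (simp_all add: LIM_zero_iff)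
  hence fa: "(\<lambda>n. f (a n)) \<longlonglongrightarrow> f t" and fb: "(\<lambda>n. f (b n)) \<longlonglongrightarrow> f t"
    using near t by (auto intro!: continuous_on_tendsto_compose[OF f])
  have "(\<lambda>n. dyadic_frac n t * (f (b n) - f (a n))) \<longlonglongrightarrow> 0"
  proof (rule Lim_null_comparison)
    show "\<forall>\<^sub>F n in sequentially.
        norm (dyadic_frac n t * (f (b n) - f (a n))) \<le> \<bar>f (b n) - f (a n)\<bar>"
      using dyadic_index_frac_bounds t
      by (intro always_eventually allI) (simp add: abs_mult mult_left_le_one_le)
    show "(\<lambda>n. \<bar>f (b n) - f (a n)\<bar>) \<longlonglongrightarrow> 0"
      using tendsto_rabs_zero[OF LIM_zero[OF tendsto_diff[OF fb fa]]] by simp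
  qed
  hence "(\<lambda>n. f (a n) + dyadic_frac n t * (f (b n) - f (a n))) \<longlonglongrightarrow> f t"
    using tendsto_add[OF fa] by fastforce
  thus ?thesis by (simp add: dyadic_interp_eq a_def b_def algebra_simps)
qed

lemma supnorm01_sub_dyadic_interp_le:
  assumes f: "continuous_on {0..1} f" and q: "0 \<le> q" "q < 1" and r: "0 \<le> r"
    and step: "\<And>m. n < m \<Longrightarrow>
      supnorm01 (\<lambda>t. dyadic_interp m f t - dyadic_interp (m - 1) f t) \<le> r * q ^ m"
  shows "supnorm01 (\<lambda>t. f t - dyadic_interp n f t) \<le> r * q ^ (n + 1) / (1 - q)"
proof (rule supnorm01_le)
  fix t :: real assume t: "t \<in> {0..1}"
  define g where "g i = dyadic_interp (i + n) f t" for i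
  have "g \<longlonglongrightarrow> f t"
    unfolding g_def by (rule LIMSEQ_ignore_initial_segment[OF dyadic_interp_tendsto[OF f t]])
  hence diffs: "(\<lambda>i. g (Suc i) - g i) sums (f t - dyadic_interp n f t)"
    using telescope_sums by (fastforce simp: g_def)
  have geom: "(\<lambda>i. r * q ^ (n + 1) * q ^ i) sums (r * q ^ (n + 1) / (1 - q))"
    using sums_mult[OF geometric_sums, of q "r * q ^ (n + 1)"] q by simp
  have "\<bar>g (Suc i) - g i\<bar> \<le> r * q ^ (n + 1) * q ^ i" for i
  proof -
    have "\<bar>g (Suc i) - g i\<bar>
        \<le> supnorm01 (\<lambda>t. dyadic_interp (Suc (i + n)) f t - dyadic_interp (i + n) f t)"
      unfolding g_def using abs_dyadic_interp_Suc_diff_le_supnorm01[OF t] by simp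
    also have "\<dots> \<le> r * q ^ Suc (i + n)" using step[of "Suc (i + n)"] by simp
    finally show ?thesis by (simp add: power_add mult_ac)
  qed
  hence "g (Suc i) - g i \<le> r * q ^ (n + 1) * q ^ i" "- (g (Suc i) - g i) \<le> r * q ^ (n + 1) * q ^ i"
    for i by (simp_all add: abs_le_iff)
  from sums_le[OF this(1) diffs geom] sums_le[OF this(2) sums_minus[OF diffs] geom]
  show "\<bar>f t - dyadic_interp n f t\<bar> \<le> r * q ^ (n + 1) / (1 - q)" by linarith
qed

lemma integrable_mult_if_square_integrable:
  fixes f g :: "'a \<Rightarrow> real"
  assumes [measurable]: "f \<in> borel_measurable M" "g \<in> borel_measurable M"
    and "integrable M (\<lambda>x. f x ^ 2)" "integrable M (\<lambda>x. g x ^ 2)"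
  shows "integrable M (\<lambda>x. f x * g x)"
proof (rule Bochner_Integration.integrable_bound)
  show "integrable M (\<lambda>x. f x ^ 2 + g x ^ 2)" using assms by simp
  have "\<bar>f x * g x\<bar> \<le> f x ^ 2 + g x ^ 2" for x
  proof -
    have "2 * (\<bar>f x\<bar> * \<bar>g x\<bar>) \<le> f x ^ 2 + g x ^ 2"
      using sum_squares_bound[of "\<bar>f x\<bar>" "\<bar>g x\<bar>"] by (simp add: mult.assoc)
    moreover have "0 \<le> \<bar>f x\<bar> * \<bar>g x\<bar>" by simp
    ultimately show ?thesis unfolding abs_mult by linarith
  qed
  thus "AE x in M. norm (f x * g x) \<le> norm (f x ^ 2 + g x ^ 2)" by simp
qed measurable

lemma real_gaussian_integrable:
  assumes "prob_space M" and X: "real_gaussian M X"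
  shows "integrable M X" "integrable M (\<lambda>\<omega>. X \<omega> ^ 2)"
proof -
  interpret prob_space M by fact
  have [measurable]: "X \<in> borel_measurable M" using X by (simp add: real_gaussian_def)
  from X consider (normal) \<mu> \<sigma> where "\<sigma> > 0" "distributed M lborel X (normal_density \<mu> \<sigma>)"
    | (const) c where "AE \<omega> in M. X \<omega> = c"
    unfolding real_gaussian_def by blast
  hence "integrable M X \<and> integrable M (\<lambda>\<omega>. X \<omega> ^ 2)"
  proof cases
    case normal
    have "integrable M X"
      using distributed_integrable[OF normal(2), of "\<lambda>x. x"]
        integrable_normal_moment_nz_1[OF normal(1)] by simp
    moreover have "integrable M (\<lambda>\<omega>. (X \<omega> - \<mu>) ^ 2)"
      using distributed_integrable[OF normal(2), of "\<lambda>x. (x - \<mu>) ^ 2"]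
        integrable_normal_moment[OF normal(1), where \<mu> = \<mu> and k = 2] by simp
    moreover have "X \<omega> ^ 2 = (X \<omega> - \<mu>) ^ 2 + 2 * \<mu> * X \<omega> - \<mu> ^ 2" for \<omega>
      by (simp add: power2_eq_square algebra_simps)
    ultimately show ?thesis by simp
  next
    case const
    have "integrable M X = integrable M (\<lambda>_. c)"
      "integrable M (\<lambda>\<omega>. X \<omega> ^ 2) = integrable M (\<lambda>_. c ^ 2)"
      by (intro integrable_cong_AE; use const in force)+
    thus ?thesis by simp
  qed
  thus "integrable M X" "integrable M (\<lambda>\<omega>. X \<omega> ^ 2)" by auto
qed

lemma (in prob_space) normal_distributed_even_moment:
  assumes "0 < \<sigma>" and X: "distributed M lborel X (normal_density 0 \<sigma>)"
  shows "integrable M (\<lambda>\<omega>. X \<omega> ^ (2 * p))"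
    and "expectation (\<lambda>\<omega>. X \<omega> ^ (2 * p)) = fact (2 * p) / (2 ^ p * fact p) * (\<sigma>\<^sup>2) ^ p"
proof -
  show "integrable M (\<lambda>\<omega>. X \<omega> ^ (2 * p))"
    using distributed_integrable[OF X, of "\<lambda>x. x ^ (2 * p)"]
      integrable_normal_moment[OF \<open>0 < \<sigma>\<close>, where \<mu> = 0 and k = "2 * p"] by simp
  have "expectation (\<lambda>\<omega>. X \<omega> ^ (2 * p)) = fact (2 * p) / ((2 / \<sigma>\<^sup>2) ^ p * fact p)"
    using distributed_integral[OF X, of "\<lambda>x. x ^ (2 * p)"]
      integral_normal_moment_even[OF \<open>0 < \<sigma>\<close>, where \<mu> = 0 and k = p] by simp
  also have "\<dots> = fact (2 * p) / (2 ^ p * fact p) * (\<sigma>\<^sup>2) ^ p"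
    using \<open>0 < \<sigma>\<close> by (simp add: power_divide field_simps)
  finally show "expectation (\<lambda>\<omega>. X \<omega> ^ (2 * p))
      = fact (2 * p) / (2 ^ p * fact p) * (\<sigma>\<^sup>2) ^ p" .
qed

lemma (in prob_space) normal_distributed_tail_le:
  assumes "0 < \<sigma>" and X: "distributed M lborel X (normal_density 0 \<sigma>)" and c: "0 < c"
  shows "emeasure M {\<omega>\<in>space M. c \<le> \<bar>X \<omega>\<bar>}
           \<le> ennreal (fact (2 * p) / (2 ^ p * fact p) * (\<sigma>\<^sup>2) ^ p / c ^ (2 * p))"
proof -
  have [measurable]: "X \<in> borel_measurable M" using distributed_measurable[OF X] by simp
  note moment = normal_distributed_even_moment[OF \<open>0 < \<sigma>\<close> X, of p]
  have "{\<omega>\<in>space M. c \<le> \<bar>X \<omega>\<bar>} \<subseteq> {\<omega>\<in>space M. c ^ (2 * p) \<le> X \<omega> ^ (2 * p)}"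
  proof safe
    fix \<omega> assume "c \<le> \<bar>X \<omega>\<bar>"
    hence "c ^ (2 * p) \<le> \<bar>X \<omega>\<bar> ^ (2 * p)" using c by (intro power_mono) auto
    thus "c ^ (2 * p) \<le> X \<omega> ^ (2 * p)" by (simp add: power_even_abs)
  qed
  hence "emeasure M {\<omega>\<in>space M. c \<le> \<bar>X \<omega>\<bar>}
      \<le> emeasure M {\<omega>\<in>space M. c ^ (2 * p) \<le> X \<omega> ^ (2 * p)}"
    by (intro emeasure_mono) measurable
  also have "\<dots> \<le> ennreal (1 / c ^ (2 * p) * expectation (\<lambda>\<omega>. X \<omega> ^ (2 * p)))"
    using moment(1) c by (intro integral_Markov_inequality[THEN order_trans])
      (auto simp: zero_le_even_power ennreal_mult'')
  finally show ?thesis unfolding moment(2) by (simp add: mult_ac)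
qed

lemma real_gaussian_tail_le:
  assumes "prob_space M" and X: "real_gaussian M X" and mean: "integral\<^sup>L M X = 0"
    and var: "integral\<^sup>L M (\<lambda>\<omega>. X \<omega> ^ 2) \<le> v" and c: "0 < c"
  shows "emeasure M {\<omega>\<in>space M. c \<le> \<bar>X \<omega>\<bar>}
           \<le> ennreal (fact (2 * p) / (2 ^ p * fact p) * v ^ p / c ^ (2 * p))"
proof -
  interpret prob_space M by fact
  have [measurable]: "X \<in> borel_measurable M" using X by (simp add: real_gaussian_def)
  from X consider (normal) \<mu> \<sigma> where "\<sigma> > 0" "distributed M lborel X (normal_density \<mu> \<sigma>)"
    | (const) d where "AE \<omega> in M. X \<omega> = d"
    unfolding real_gaussian_def by blast
  thus ?thesis
  proof cases
    case normal
    have "\<mu> = 0" using normal_distributed_expectation[OF normal] mean by simp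
    hence X0: "distributed M lborel X (normal_density 0 \<sigma>)" using normal(2) by simp
    have "\<sigma>\<^sup>2 \<le> v"
      using normal_distributed_variance[OF normal(1) X0] mean var by simp
    hence "fact (2 * p) / (2 ^ p * fact p) * (\<sigma>\<^sup>2) ^ p / c ^ (2 * p)
        \<le> fact (2 * p) / (2 ^ p * fact p) * v ^ p / c ^ (2 * p)"
      using c by (intro divide_right_mono mult_left_mono power_mono) auto
    with normal_distributed_tail_le[OF normal(1) X0 c, of p] show ?thesis
      by (meson ennreal_leI order_trans)
  next
    case const
    have "d = integral\<^sup>L M X" using integral_cong_AE[of X M "\<lambda>_. d"] const by (simp add: prob_space)
    hence "AE \<omega> in M. \<omega> \<notin> {\<omega>\<in>space M. c \<le> \<bar>X \<omega>\<bar>}" using const mean c by auto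
    hence "emeasure M {\<omega>\<in>space M. c \<le> \<bar>X \<omega>\<bar>} = 0" by (intro AE_iff_measurable[THEN iffD1]) auto
    thus ?thesis by simp
  qed
qed

lemma
  assumes "fBm M H B"
  shows fBm_prob_space: "prob_space M"
    and fBm_measurable: "t \<in> {0..1} \<Longrightarrow> B t \<in> borel_measurable M"
    and fBm_continuous: "\<omega> \<in> space M \<Longrightarrow> continuous_on {0..1} (\<lambda>t. B t \<omega>)"
    and fBm_gaussian_lincomb: "length cs = length ts \<Longrightarrow> set ts \<subseteq> {0..1} \<Longrightarrow>
      real_gaussian M (\<lambda>\<omega>. \<Sum>i<length ts. cs ! i * B (ts ! i) \<omega>)"
    and fBm_mean: "t \<in> {0..1} \<Longrightarrow> integral\<^sup>L M (B t) = 0"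
    and fBm_covariance: "s \<in> {0..1} \<Longrightarrow> t \<in> {0..1} \<Longrightarrow> integral\<^sup>L M (\<lambda>\<omega>. B s \<omega> * B t \<omega>) =
      (\<bar>s\<bar> powr (2 * H) + \<bar>t\<bar> powr (2 * H) - \<bar>s - t\<bar> powr (2 * H)) / 2"
  using assms unfolding fBm_def by blast+

lemma fBm_real_gaussian:
  assumes "fBm M H B" "u \<in> {0..1}"
  shows "real_gaussian M (B u)"
  using fBm_gaussian_lincomb[OF assms(1), of "[1]" "[u]"] assms(2) by simp

lemma
  assumes "fBm M H B" "u \<in> {0..1}"
  shows fBm_integrable: "integrable M (B u)"
    and fBm_integrable_square: "integrable M (\<lambda>\<omega>. B u \<omega> ^ 2)"
  using real_gaussian_integrable[OF fBm_prob_space[OF assms(1)] fBm_real_gaussian[OF assms]] by auto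

lemma fBm_increment_second_moment:
  assumes F: "fBm M H B" and u: "u \<in> {0..1}" and v: "v \<in> {0..1}"
  shows "integrable M (\<lambda>\<omega>. (B u \<omega> - B v \<omega>) ^ 2)"
    and "integral\<^sup>L M (\<lambda>\<omega>. (B u \<omega> - B v \<omega>) ^ 2) = \<bar>u - v\<bar> powr (2 * H)"
proof -
  have [measurable]: "B u \<in> borel_measurable M" "B v \<in> borel_measurable M"
    using fBm_measurable[OF F] u v by auto
  have int: "integrable M (\<lambda>\<omega>. B x \<omega> * B y \<omega>)" if "x \<in> {u, v}" "y \<in> {u, v}" for x y
    using that u v
    by (intro integrable_mult_if_square_integrable fBm_integrable_square[OF F]) auto
  have expand: "(\<lambda>\<omega>. (B u \<omega> - B v \<omega>) ^ 2)
      = (\<lambda>\<omega>. B u \<omega> * B u \<omega> - 2 * (B u \<omega> * B v \<omega>) + B v \<omega> * B v \<omega>)"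
    by (auto simp: power2_eq_square algebra_simps)
  show "integrable M (\<lambda>\<omega>. (B u \<omega> - B v \<omega>) ^ 2)"
    unfolding expand using int by auto
  show "integral\<^sup>L M (\<lambda>\<omega>. (B u \<omega> - B v \<omega>) ^ 2) = \<bar>u - v\<bar> powr (2 * H)"
    unfolding expand using int fBm_covariance[OF F u u] fBm_covariance[OF F u v]
      fBm_covariance[OF F v v] by simp
qed

lemma dyadic_nodes_in_unit:
  assumes "j < (2::nat) ^ k"
  shows "real (2 * j + 1) / 2 ^ Suc k \<in> {0..1}" "real j / 2 ^ k \<in> {0..1}"
    "real (j + 1) / 2 ^ k \<in> {0..1}"
proof -
  have "real j + 1 \<le> 2 ^ k"
    using assms by (metis Suc_leI of_nat_Suc of_nat_le_iff of_nat_numeral of_nat_power add.commute)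
  moreover from this have "real j \<le> 2 ^ k" by linarith
  ultimately show "real (2 * j + 1) / 2 ^ Suc k \<in> {0..1}" "real j / 2 ^ k \<in> {0..1}"
    "real (j + 1) / 2 ^ k \<in> {0..1}"
    by (auto simp: field_simps)
qed

lemma fBm_midpoint_defect_gaussian:
  assumes F: "fBm M H B" and j: "j < (2::nat) ^ k"
  shows "real_gaussian M (\<lambda>\<omega>. midpoint_defect (\<lambda>s. B s \<omega>) k j)"
proof -
  define ts where "ts = [real (2 * j + 1) / 2 ^ Suc k, real j / 2 ^ k, real (j + 1) / 2 ^ k]"
  define cs :: "real list" where "cs = [1, - 1 / 2, - 1 / 2]"
  have "real_gaussian M (\<lambda>\<omega>. \<Sum>i<length ts. cs ! i * B (ts ! i) \<omega>)"
    using dyadic_nodes_in_unit[OF j] by (intro fBm_gaussian_lincomb[OF F]) (auto simp: ts_def cs_def)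
  moreover have "(\<Sum>i<length ts. cs ! i * B (ts ! i) \<omega>) = midpoint_defect (\<lambda>s. B s \<omega>) k j" for \<omega>
    by (simp add: ts_def cs_def midpoint_defect_def lessThan_Suc eval_nat_numeral add_divide_distrib)
  ultimately show ?thesis by simp
qed

lemma fBm_midpoint_defect_mean:
  assumes F: "fBm M H B" and j: "j < (2::nat) ^ k"
  shows "integral\<^sup>L M (\<lambda>\<omega>. midpoint_defect (\<lambda>s. B s \<omega>) k j) = 0"
proof -
  note nodes = dyadic_nodes_in_unit[OF j]
  have "integral\<^sup>L M (\<lambda>\<omega>. midpoint_defect (\<lambda>s. B s \<omega>) k j)
      = integral\<^sup>L M (B (real (2 * j + 1) / 2 ^ Suc k))
        - (integral\<^sup>L M (B (real j / 2 ^ k)) + integral\<^sup>L M (B (real (j + 1) / 2 ^ k))) / 2"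
    unfolding midpoint_defect_def using fBm_integrable[OF F nodes(1)]
      fBm_integrable[OF F nodes(2)] fBm_integrable[OF F nodes(3)] by simp
  thus ?thesis using fBm_mean[OF F nodes(1)] fBm_mean[OF F nodes(2)] fBm_mean[OF F nodes(3)] by simp
qed

lemma square_midpoint_le: "((y + z) / 2) ^ 2 \<le> (y ^ 2 + z ^ 2) / (2::real)"
  using sum_squares_bound[of y z] by (simp add: power2_eq_square field_simps)

lemma one_over_pow2_powr: "(1 / 2 ^ m :: real) powr a = 2 powr (- (a * real m))"
  by (simp add: powr_minus_divide powr_divide powr_powr powr_realpow[symmetric] mult.commute)

lemma fBm_midpoint_defect_second_moment_le:
  assumes F: "fBm M H B" and j: "j < (2::nat) ^ k"
  shows "integral\<^sup>L M (\<lambda>\<omega>. midpoint_defect (\<lambda>s. B s \<omega>) k j ^ 2)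
           \<le> 2 powr (- (2 * H * real (Suc k)))"
proof -
  define x where "x = real (2 * j + 1) / 2 ^ Suc k"
  define a where "a = real j / 2 ^ k"
  define b where "b = real (j + 1) / 2 ^ k"
  have nodes: "x \<in> {0..1}" "a \<in> {0..1}" "b \<in> {0..1}"
    using dyadic_nodes_in_unit[OF j] by (simp_all add: x_def a_def b_def)
  have dist: "\<bar>x - a\<bar> = 1 / 2 ^ Suc k" "\<bar>x - b\<bar> = 1 / 2 ^ Suc k"
    by (simp_all add: x_def a_def b_def field_simps)
  note incr_a = fBm_increment_second_moment[OF F nodes(1,2)]
  note incr_b = fBm_increment_second_moment[OF F nodes(1,3)]
  have defect: "midpoint_defect (\<lambda>s. B s \<omega>) k j = ((B x \<omega> - B a \<omega>) + (B x \<omega> - B b \<omega>)) / 2"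
    for \<omega> by (simp add: midpoint_defect_def x_def a_def b_def field_simps)
  have "integral\<^sup>L M (\<lambda>\<omega>. midpoint_defect (\<lambda>s. B s \<omega>) k j ^ 2)
      \<le> integral\<^sup>L M (\<lambda>\<omega>. ((B x \<omega> - B a \<omega>) ^ 2 + (B x \<omega> - B b \<omega>) ^ 2) / 2)"
    unfolding defect using incr_a incr_b
      real_gaussian_integrable(2)[OF fBm_prob_space[OF F] fBm_midpoint_defect_gaussian[OF F j]]
    by (intro integral_mono square_midpoint_le) (auto simp: defect)
  also have "\<dots> = (1 / 2 ^ Suc k) powr (2 * H)"
    using incr_a incr_b dist by simp
  finally show ?thesis by (simp only: one_over_pow2_powr mult_ac)
qed

lemma fBm_midpoint_defect_tail_le:
  assumes F: "fBm M H B" and j: "j < (2::nat) ^ k" and \<rho>: "0 < \<rho>"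
  shows "emeasure M {\<omega>\<in>space M.
             \<rho> * 2 powr (- (H - \<delta>) * real (Suc k)) \<le> \<bar>midpoint_defect (\<lambda>s. B s \<omega>) k j\<bar>}
           \<le> ennreal (fact (2 * p) / (2 ^ p * fact p) / \<rho> ^ (2 * p)
                      * (2 powr (- (2 * \<delta> * real p))) ^ Suc k)"
proof -
  define m where "m = real (Suc k)"
  have ratio: "(2 powr (- (2 * H * m))) ^ p / (\<rho> * 2 powr (- (H - \<delta>) * m)) ^ (2 * p)
      = (2 powr (- (2 * \<delta> * real p))) ^ Suc k / \<rho> ^ (2 * p)"
  proof -
    have "(2 powr (- (2 * H * m))) ^ p = 2 powr (real p * (- (2 * H * m)))"
      "(2 powr (- (2 * \<delta> * real p))) ^ Suc k = 2 powr (m * (- (2 * \<delta> * real p)))"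
      unfolding m_def by (rule powr_power; simp)+
    moreover have "(\<rho> * 2 powr (- (H - \<delta>) * m)) ^ (2 * p)
        = \<rho> ^ (2 * p) * 2 powr (real (2 * p) * (- (H - \<delta>) * m))"
      by (simp add: powr_power power_mult_distrib)
    moreover have "real p * (- (2 * H * m)) - real (2 * p) * (- (H - \<delta>) * m)
        = m * (- (2 * \<delta> * real p))"
      by (simp add: algebra_simps)
    ultimately show ?thesis using \<rho> by (simp add: powr_diff[symmetric] field_simps)
  qed
  have tail: "emeasure M {\<omega>\<in>space M.
                \<rho> * 2 powr (- (H - \<delta>) * m) \<le> \<bar>midpoint_defect (\<lambda>s. B s \<omega>) k j\<bar>}
      \<le> ennreal (fact (2 * p) / (2 ^ p * fact p) * (2 powr (- (2 * H * m))) ^ p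
                  / (\<rho> * 2 powr (- (H - \<delta>) * m)) ^ (2 * p))"
    using \<rho> fBm_midpoint_defect_second_moment_le[OF F j]
    by (intro real_gaussian_tail_le[OF fBm_prob_space[OF F] fBm_midpoint_defect_gaussian[OF F j]
          fBm_midpoint_defect_mean[OF F j]]) (simp_all add: m_def)
  have "fact (2 * p) / (2 ^ p * fact p) * (2 powr (- (2 * H * m))) ^ p
        / (\<rho> * 2 powr (- (H - \<delta>) * m)) ^ (2 * p)
      = fact (2 * p) / (2 ^ p * fact p) / \<rho> ^ (2 * p) * (2 powr (- (2 * \<delta> * real p))) ^ Suc k"
    by (simp only: times_divide_eq_right[symmetric] ratio) (simp add: field_simps)
  with tail show ?thesis by (simp only: m_def)
qed

definition large_defect_event ::
    "'a measure \<Rightarrow> (real \<Rightarrow> 'a \<Rightarrow> real) \<Rightarrow> real \<Rightarrow> real \<Rightarrow> real \<Rightarrow> nat \<Rightarrow> 'a set" where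
  "large_defect_event M B H \<delta> \<rho> k = (\<Union>j<2 ^ k.
     {\<omega>\<in>space M. \<rho> * 2 powr (- (H - \<delta>) * real (Suc k)) \<le> \<bar>midpoint_defect (\<lambda>s. B s \<omega>) k j\<bar>})"

lemma fBm_large_midpoint_defect_sets:
  assumes F: "fBm M H B" and j: "j < (2::nat) ^ k"
  shows "{\<omega>\<in>space M. r \<le> \<bar>midpoint_defect (\<lambda>s. B s \<omega>) k j\<bar>} \<in> sets M"
proof -
  have [measurable]: "(\<lambda>\<omega>. midpoint_defect (\<lambda>s. B s \<omega>) k j) \<in> borel_measurable M"
    using fBm_midpoint_defect_gaussian[OF F j] by (simp add: real_gaussian_def)
  show ?thesis by measurable
qed

lemma large_defect_event_sets:
  assumes "fBm M H B"
  shows "large_defect_event M B H \<delta> \<rho> k \<in> sets M"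
  unfolding large_defect_event_def
  using fBm_large_midpoint_defect_sets[OF assms] by (intro sets.finite_UN) auto

lemma emeasure_large_defect_event_le:
  assumes F: "fBm M H B" and \<rho>: "0 < \<rho>"
  shows "emeasure M (large_defect_event M B H \<delta> \<rho> k)
     \<le> ennreal (fact (2 * p) / (2 ^ p * fact p) / \<rho> ^ (2 * p)
                 * (2 * 2 powr (- (2 * \<delta> * real p))) ^ Suc k)"
proof -
  define C where "C = fact (2 * p) / (2 ^ p * fact p) / \<rho> ^ (2 * p)"
  define q where "q = (2::real) powr (- (2 * \<delta> * real p))"
  have C: "0 \<le> C" and q: "0 \<le> q" using \<rho> by (simp_all add: C_def q_def)
  have "emeasure M (large_defect_event M B H \<delta> \<rho> k)
      \<le> (\<Sum>j<2 ^ k. emeasure M {\<omega>\<in>space M. \<rho> * 2 powr (- (H - \<delta>) * real (Suc k))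
                                             \<le> \<bar>midpoint_defect (\<lambda>s. B s \<omega>) k j\<bar>})"
    unfolding large_defect_event_def
    using fBm_large_midpoint_defect_sets[OF F] by (intro emeasure_subadditive_finite) auto
  also have "\<dots> \<le> (\<Sum>j<(2::nat) ^ k. ennreal (C * q ^ Suc k))"
    using fBm_midpoint_defect_tail_le[OF F _ \<rho>] by (intro sum_mono) (simp add: C_def q_def)
  also have "\<dots> = ennreal (2 ^ k * (C * q ^ Suc k))"
    using C q by (subst sum_ennreal) auto
  also have "\<dots> \<le> ennreal (C * (2 * q) ^ Suc k)"
    using C q by (intro ennreal_leI) (simp add: power_mult_distrib mult_ac mult_right_mono)
  finally show ?thesis by (simp add: C_def q_def)
qed

lemma mem_large_defect_event:
  assumes "\<omega> \<in> space M"
    and "\<rho> * 2 powr (- (H - \<delta>) * real (Suc k))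
           \<le> supnorm01 (\<lambda>t. dyadic_interp (Suc k) (\<lambda>s. B s \<omega>) t - dyadic_interp k (\<lambda>s. B s \<omega>) t)"
  shows "\<omega> \<in> large_defect_event M B H \<delta> \<rho> k"
proof -
  let ?defects = "(\<lambda>j. \<bar>midpoint_defect (\<lambda>s. B s \<omega>) k j\<bar>) ` {..<2 ^ k}"
  have "Max ?defects \<in> ?defects" by (intro Max_in) (auto simp: lessThan_empty_iff)
  then obtain j where "j < 2 ^ k" "Max ?defects = \<bar>midpoint_defect (\<lambda>s. B s \<omega>) k j\<bar>" by auto
  with assms supnorm01_dyadic_interp_Suc_diff_le[of k "\<lambda>s. B s \<omega>"]
  show ?thesis unfolding large_defect_event_def by fastforce
qed

lemma exp_enat_Sup_le_suminf:
  assumes "0 < t"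
  shows "exp_enat t (Sup (enat ` S)) \<le> 1 + (\<Sum>n. ennreal (exp (t * real n)) * indicator S n)"
proof -
  define R where "R = (\<Sum>n. ennreal (exp (t * real n)) * indicator S n)"
  have term_le: "ennreal (exp (t * real n)) \<le> R" if "n \<in> S" for n
    using sum_le_suminf[OF summableI, of "{n}" "\<lambda>n. ennreal (exp (t * real n)) * indicator S n"] that
    by (simp add: R_def)
  consider "S = {}" | "finite S" "S \<noteq> {}" | "infinite S" by blast
  hence "exp_enat t (Sup (enat ` S)) \<le> 1 + R"
  proof cases
    case 1
    thus ?thesis by (simp add: exp_enat_def Sup_enat_def zero_enat_def)
  next
    case 2
    hence "Sup (enat ` S) \<in> enat ` S" by (simp add: Sup_enat_def)
    then obtain n where n: "n \<in> S" "Sup (enat ` S) = enat n" by blast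
    have "exp_enat t (Sup (enat ` S)) = ennreal (exp (t * real n))"
      by (simp add: n(2) exp_enat_def)
    also have "\<dots> \<le> R" by (rule term_le[OF n(1)])
    finally show ?thesis by (simp add: add_increasing)
  next
    case 3
    have "Sup (enat ` S) = \<infinity>"
      using 3 by (auto simp: Sup_enat_def finite_image_iff inj_on_def)
    moreover have "R = \<infinity>"
    proof (rule ccontr)
      assume "R \<noteq> \<infinity>"
      then obtain y where y: "R = ennreal y" "0 \<le> y" by (cases R rule: ennreal_cases) auto
      obtain m :: nat where m: "y / t < real m" using reals_Archimedean2 by blast
      obtain n where n: "n \<in> S" "m < n" using 3 infinite_nat_iff_unbounded by blast
      have "y < t * real m" using m \<open>0 < t\<close> by (simp add: field_simps)
      also have "\<dots> < t * real n" using n(2) \<open>0 < t\<close> by simp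
      also have "\<dots> < exp (t * real n)" by (rule exp_gt_self)
      finally have "ennreal y < ennreal (exp (t * real n))" using y(2) by (simp add: ennreal_less_iff)
      thus False using term_le[OF n(1)] y(1) by simp
    qed
    ultimately show ?thesis by (simp add: exp_enat_def)
  qed
  thus ?thesis by (simp add: R_def)
qed

lemma exp_enat_fbm_N_le:
  assumes "\<omega> \<in> space M" "0 < t"
  shows "exp_enat t (fbm_N B H \<delta> \<rho> \<omega>)
     \<le> 1 + (\<Sum>k. ennreal (exp (t * real (Suc k)))
                    * indicator (large_defect_event M B H \<delta> \<rho> k) \<omega>)"
proof -
  define S where "S = {n. n \<ge> 1 \<and>
    supnorm01 (\<lambda>t. dyadic_interp n (\<lambda>s. B s \<omega>) t - dyadic_interp (n - 1) (\<lambda>s. B s \<omega>) t)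
      \<ge> \<rho> * 2 powr (- (H - \<delta>) * real n)}"
  define g where "g n = ennreal (exp (t * real n)) * indicator S n" for n
  have "exp_enat t (fbm_N B H \<delta> \<rho> \<omega>) \<le> 1 + (\<Sum>n. g n)"
    unfolding fbm_N_def S_def[symmetric] g_def by (rule exp_enat_Sup_le_suminf[OF assms(2)])
  also have "(\<Sum>n. g n) = (\<Sum>k. g (Suc k))"
    using sums_Suc[OF summable_sums[OF summableI[of "\<lambda>k. g (Suc k)"]]]
    by (simp add: sums_iff g_def S_def)
  also have "\<dots> \<le> (\<Sum>k. ennreal (exp (t * real (Suc k)))
                          * indicator (large_defect_event M B H \<delta> \<rho> k) \<omega>)"
    using mem_large_defect_event[OF assms(1)]
    by (intro suminf_le) (auto simp: g_def S_def indicator_def)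
  finally show ?thesis by (simp add: add_left_mono)
qed

lemma nn_integral_exp_enat_fbm_N_le:
  assumes F: "fBm M H B" and "0 < t"
  shows "(\<integral>\<^sup>+ \<omega>. exp_enat t (fbm_N B H \<delta> \<rho> \<omega>) \<partial>M)
     \<le> 1 + (\<Sum>k. ennreal (exp (t * real (Suc k)))
                    * emeasure M (large_defect_event M B H \<delta> \<rho> k))"
proof -
  interpret prob_space M by (rule fBm_prob_space[OF F])
  have [measurable]: "large_defect_event M B H \<delta> \<rho> k \<in> sets M" for k
    by (rule large_defect_event_sets[OF F])
  have "(\<integral>\<^sup>+ \<omega>. exp_enat t (fbm_N B H \<delta> \<rho> \<omega>) \<partial>M)
      \<le> (\<integral>\<^sup>+ \<omega>. 1 + (\<Sum>k. ennreal (exp (t * real (Suc k)))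
                          * indicator (large_defect_event M B H \<delta> \<rho> k) \<omega>) \<partial>M)"
    using exp_enat_fbm_N_le[OF _ assms(2)] by (intro nn_integral_mono) auto
  also have "\<dots> = 1 + (\<Sum>k. ennreal (exp (t * real (Suc k)))
                              * emeasure M (large_defect_event M B H \<delta> \<rho> k))"
    by (simp add: nn_integral_add nn_integral_suminf nn_integral_cmult_indicator emeasure_space_1)
  finally show ?thesis .
qed

lemma exp_mult_dyadic_decay_less_1:
  assumes "0 < \<delta>"
  obtains p :: nat where "exp t * (2 * 2 powr (- (2 * \<delta> * real p))) < 1"
proof -
  define \<theta> where "\<theta> = (2::real) powr (- (2 * \<delta>))"
  have \<theta>: "0 < \<theta>" "\<theta> < 1" using assms by (simp_all add: \<theta>_def powr_less_one)
  have "(\<lambda>p. exp t * (2 * \<theta> ^ p)) \<longlonglongrightarrow> exp t * (2 * 0)"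
    using \<theta> by (intro tendsto_intros LIMSEQ_realpow_zero) auto
  from order_tendstoD(2)[OF this, of 1] obtain p where "exp t * (2 * \<theta> ^ p) < 1"
    by (auto simp: eventually_sequentially)
  moreover have "\<theta> ^ p = 2 powr (- (2 * \<delta> * real p))"
    unfolding \<theta>_def by (subst powr_power) (simp_all add: mult_ac)
  ultimately show ?thesis using that by simp
qed

lemma nn_integral_exp_enat_fbm_N_finite:
  assumes F: "fBm M H B" and \<delta>: "0 < \<delta>" and \<rho>: "0 < \<rho>" and t: "0 < t"
  shows "(\<integral>\<^sup>+ \<omega>. exp_enat t (fbm_N B H \<delta> \<rho> \<omega>) \<partial>M) < \<infinity>"
proof -
  obtain p :: nat where p: "exp t * (2 * 2 powr (- (2 * \<delta> * real p))) < 1"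
    using exp_mult_dyadic_decay_less_1[OF \<delta>] .
  define C where "C = fact (2 * p) / (2 ^ p * fact p) / \<rho> ^ (2 * p)"
  define q where "q = 2 * (2::real) powr (- (2 * \<delta> * real p))"
  define w where "w = exp t * q"
  have C: "0 \<le> C" and q: "0 \<le> q" and w: "0 \<le> w" "w < 1"
    using \<rho> p by (simp_all add: C_def q_def w_def)
  have "ennreal (exp (t * real (Suc k))) * emeasure M (large_defect_event M B H \<delta> \<rho> k)
      \<le> ennreal (C * w ^ Suc k)" for k
  proof -
    have "ennreal (exp (t * real (Suc k))) * emeasure M (large_defect_event M B H \<delta> \<rho> k)
        \<le> ennreal (exp (t * real (Suc k))) * ennreal (C * q ^ Suc k)"
      using emeasure_large_defect_event_le[OF F \<rho>, of \<delta> k p]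
      by (intro mult_left_mono) (simp_all add: C_def q_def)
    also have "\<dots> = ennreal (exp (t * real (Suc k)) * (C * q ^ Suc k))"
      using C q by (intro ennreal_mult[symmetric]) simp_all
    also have "exp (t * real (Suc k)) * (C * q ^ Suc k) = C * w ^ Suc k"
      unfolding w_def power_mult_distrib exp_of_nat_mult[symmetric] by (simp add: mult_ac)
    finally show ?thesis .
  qed
  hence "(\<Sum>k. ennreal (exp (t * real (Suc k))) * emeasure M (large_defect_event M B H \<delta> \<rho> k))
      \<le> (\<Sum>k. ennreal (C * w ^ Suc k))"
    by (intro suminf_le) auto
  also have "\<dots> < \<infinity>"
  proof -
    have "summable (\<lambda>k. C * w * w ^ k)" using w by (intro summable_mult summable_geometric) simp
    hence "(\<Sum>k. ennreal (C * w ^ Suc k)) \<noteq> \<top>"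
      using C w by (intro ennreal_suminf_neq_top) (simp_all add: mult.assoc)
    thus ?thesis by (simp add: less_top)
  qed
  finally show ?thesis
    using nn_integral_exp_enat_fbm_N_le[OF F t, of \<delta> \<rho>]
    by (simp add: ennreal_add_less_top le_less_trans)
qed

lemma dyadic_step_less_beyond_fbm_N:
  assumes "fbm_N B H \<delta> \<rho> \<omega> < enat n" "n < m"
  shows "supnorm01 (\<lambda>t. dyadic_interp m (\<lambda>s. B s \<omega>) t - dyadic_interp (m - 1) (\<lambda>s. B s \<omega>) t)
           < \<rho> * 2 powr (- (H - \<delta>) * real m)"
proof (rule ccontr)
  assume "\<not> ?thesis"
  hence "enat m \<le> fbm_N B H \<delta> \<rho> \<omega>"
    using assms(2) unfolding fbm_N_def by (intro Sup_upper imageI) auto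
  thus False using assms by (metis enat_ord_simps(2) leD less_trans)
qed

theorem theorem3:
  fixes M :: "'a measure" and B :: "real \<Rightarrow> 'a \<Rightarrow> real" and H \<delta> \<rho> :: real
  assumes "0 < H" "H < 1"
    and "fBm M H B"
    and "0 < \<delta>" "\<delta> < H"
    and "0 < \<rho>"
  shows "(\<forall>t::real. t > 0 \<longrightarrow> (\<integral>\<^sup>+ \<omega>. exp_enat t (fbm_N B H \<delta> \<rho> \<omega>) \<partial>M) < \<infinity>)
     \<and> (\<forall>\<omega>\<in>space M. \<forall>n::nat. enat n > fbm_N B H \<delta> \<rho> \<omega> \<longrightarrow>
          supnorm01 (\<lambda>t. B t \<omega> - dyadic_interp n (\<lambda>s. B s \<omega>) t)
            \<le> \<rho> * 2 powr (- (H - \<delta>) * real (n + 1)) / (1 - 2 powr (- (H - \<delta>))))"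
proof (intro conjI allI impI ballI)
  fix t :: real assume "t > 0"
  thus "(\<integral>\<^sup>+ \<omega>. exp_enat t (fbm_N B H \<delta> \<rho> \<omega>) \<partial>M) < \<infinity>"
    by (rule nn_integral_exp_enat_fbm_N_finite[OF assms(3,4,6)])
next
  fix \<omega> n assume \<omega>: "\<omega> \<in> space M" and N: "fbm_N B H \<delta> \<rho> \<omega> < enat n"
  define q where "q = (2::real) powr (- (H - \<delta>))"
  have q: "0 \<le> q" "q < 1" using assms(5) by (simp_all add: q_def powr_less_one)
  have powr_q: "2 powr (- (H - \<delta>) * real m) = q ^ m" for m
    unfolding q_def by (subst powr_power) (simp_all add: mult_ac)
  show "supnorm01 (\<lambda>t. B t \<omega> - dyadic_interp n (\<lambda>s. B s \<omega>) t)
      \<le> \<rho> * 2 powr (- (H - \<delta>) * real (n + 1)) / (1 - 2 powr (- (H - \<delta>)))"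
    unfolding powr_q q_def[symmetric]
  proof (rule supnorm01_sub_dyadic_interp_le[OF fBm_continuous[OF assms(3) \<omega>] q])
    show "0 \<le> \<rho>" using assms(6) by simp
    show "supnorm01 (\<lambda>t. dyadic_interp m (\<lambda>s. B s \<omega>) t - dyadic_interp (m - 1) (\<lambda>s. B s \<omega>) t)
        \<le> \<rho> * q ^ m" if "n < m" for m
      using dyadic_step_less_beyond_fbm_N[OF N that] unfolding powr_q by simp
  qed
qed

end
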